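(* Define subgroups $W_1 \subseteq \dots \subseteq W_p \subseteq W_{p+1} := W_{\mathfrak g}$ by $W_p = \operatorname{Stab}_{W_{\mathfrak g}}(U_p)$ and $W_{i-1} = \operatorname{Stab}_{W_i}(U_{i-1})$ for $i \in \{2,\dots,p\}$. Then $W_i = \operatorname{Stab}_{W_{i+1}}(\mathbf B_i)$ for all $i \in \{1,\dots,p\}$, and $(W_{\mathfrak g}Q) \cap \mathbf B = \mathcal O_Q$, where $\mathcal O_Q$ is the orbit of $Q$ under $W_1$.
   Context: $G$ is a connected complex reductive Lie group, $\mathfrak g = \mathrm{Lie}(G)$, $T\subseteq G$ a maximal torus, $\mathfrak t = \mathrm{Lie}(T)$, $\Phi_{\mathfrak g}$ the root system of $(\mathfrak g,\mathfrak t)$, $W_{\mathfrak g}$ the Weyl group acting on $\mathfrak t$. For $S \subseteq \mathfrak t$ and a subgroup $H \subseteq W_{\mathfrak g}$, $\operatorname{Stab}_H(S) = \{w \in H : w(S)\subseteq S\}$. Fix an integer $p \geq 1$ and $A_1,\dots,A_p \in \mathfrak t$, and let $Q = \sum_{i=1}^p A_i z^{-i}$, identified with $(A_1,\dots,A_p) \in \mathfrak t^p$, on which $W_{\mathfrak g}$ acts diagonally. For $\alpha \in \Phi_{\mathfrak g}$ let $d_\alpha = \max\{i : \alpha(A_i)\neq 0\}$ ($d_\alpha = 0$ if $\alpha(A_i)=0$ for all $i$). For $i \in \{1,\dots,p\}$ let $\Phi_{\mathfrak h_i} = \{\alpha : d_\alpha < i\}$ (the roots of the centraliser of $\{A_i,\dots,A_p\}$),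 $U_i = \bigcap_{\alpha \in \Phi_{\mathfrak h_i}}\ker(\alpha)$ (equal to $\mathfrak t$ if $\Phi_{\mathfrak h_i}$ is empty), and $$\mathbf B_i = \{X \in \mathfrak t : \alpha(X) = 0 \text{ whenever } d_\alpha < i, \ \alpha(X) \neq 0 \text{ whenever } d_\alpha = i\},$$ and $\mathbf B = \mathbf B_1 \times \dots \times \mathbf B_p \subseteq \mathfrak t^p$. *)

theory Defs
  imports "HOL-Analysis.Analysis"
begin

text \<open>The Cartan subalgebra t is modelled as complex^'n; its dual t* is identified with
complex^'n via the coordinate pairing below.\<close>

definition ev :: "complex^'n \<Rightarrow> complex^'n \<Rightarrow> complex" where
  "ev \<alpha> X = (\<Sum>i\<in>UNIV. \<alpha> $ i * X $ i)"

definition refl_t :: "(complex^'n \<Rightarrow> complex^'n) \<Rightarrow> complex^'n \<Rightarrow> complex^'n \<Rightarrow> complex^'n" where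
  "refl_t cor \<alpha> X = X - ev \<alpha> X *s cor \<alpha>"

text \<open>Dual reflection on t*: beta composed with s_alpha.\<close>
definition refl_dual :: "(complex^'n \<Rightarrow> complex^'n) \<Rightarrow> complex^'n \<Rightarrow> complex^'n \<Rightarrow> complex^'n" where
  "refl_dual cor \<alpha> \<beta> = \<beta> - ev \<beta> (cor \<alpha>) *s \<alpha>"

text \<open>Roots Phi of (g,t) together with coroots: the axioms of a (reduced) root datum over C.\<close>
definition root_datum :: "(complex^'n) set \<Rightarrow> (complex^'n \<Rightarrow> complex^'n) \<Rightarrow> bool" where
  "root_datum \<Phi> cor \<longleftrightarrow> finite \<Phi> \<and>
     (\<forall>\<alpha>\<in>\<Phi>. ev \<alpha> (cor \<alpha>) = 2 \<and>
        (\<forall>\<beta>\<in>\<Phi>. ev \<beta> (cor \<alpha>) \<in> \<int> \<and> refl_dual cor \<alpha> \<beta> \<in> \<Phi> \<and>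
                  cor (refl_dual cor \<alpha> \<beta>) = refl_t cor \<alpha> (cor \<beta>)) \<and>
        (\<forall>c. c *s \<alpha> \<in> \<Phi> \<longrightarrow> c = 1 \<or> c = -1))"

inductive_set weyl_group :: "(complex^'n) set \<Rightarrow> (complex^'n \<Rightarrow> complex^'n)
    \<Rightarrow> (complex^'n \<Rightarrow> complex^'n) set" for \<Phi> cor where
  weyl_id: "id \<in> weyl_group \<Phi> cor"
| weyl_step: "w \<in> weyl_group \<Phi> cor \<Longrightarrow> \<alpha> \<in> \<Phi> \<Longrightarrow> refl_t cor \<alpha> \<circ> w \<in> weyl_group \<Phi> cor"

definition Stab :: "('a \<Rightarrow> 'a) set \<Rightarrow> 'a set \<Rightarrow> ('a \<Rightarrow> 'a) set" where
  "Stab H S = {w \<in> H. w ` S \<subseteq> S}"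

text \<open>d_alpha for Q = sum A_i z^(-i), i = 1..p.\<close>
definition dd :: "nat \<Rightarrow> (nat \<Rightarrow> complex^'n) \<Rightarrow> complex^'n \<Rightarrow> nat" where
  "dd p A \<alpha> = Max ({0} \<union> {i \<in> {1..p}. ev \<alpha> (A i) \<noteq> 0})"

definition Uset :: "(complex^'n) set \<Rightarrow> nat \<Rightarrow> (nat \<Rightarrow> complex^'n) \<Rightarrow> nat \<Rightarrow> (complex^'n) set" where
  "Uset \<Phi> p A i = {X. \<forall>\<alpha>\<in>\<Phi>. dd p A \<alpha> < i \<longrightarrow> ev \<alpha> X = 0}"

definition Bset :: "(complex^'n) set \<Rightarrow> nat \<Rightarrow> (nat \<Rightarrow> complex^'n) \<Rightarrow> nat \<Rightarrow> (complex^'n) set" where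
  "Bset \<Phi> p A i = {X. \<forall>\<alpha>\<in>\<Phi>. (dd p A \<alpha> < i \<longrightarrow> ev \<alpha> X = 0) \<and> (dd p A \<alpha> = i \<longrightarrow> ev \<alpha> X \<noteq> 0)}"

end

theory Submission
  imports Defs
begin

(* Every Weyl group element w acts on the roots through a permutation f of the roots with
   alpha(w X) = (f alpha)(X). Since U_k is the common kernel of the roots of level d_alpha < k,
   w preserves U_k exactly when f preserves the roots of level < k; and for that it suffices
   that w maps each A_j, j >= k, into U_k, because A_j is detected by every root of level j.
   If f preserves the roots of level < i and of level < i + 1, it preserves those of level
   exactly i, so w preserves B_i. Conversely B_i spans U_i, as X + t A_i lies in B_i for all
   but finitely many t. Finally, an element w with w(A_j) in B_j, which is contained in
   U_j and hence in U_k, for all j >= k preserves every U_k and therefore lies in W_1. *)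

lemma ev_add_right: "ev \<alpha> (X + Y) = ev \<alpha> X + ev \<alpha> Y"
  unfolding ev_def by (simp add: distrib_left sum.distrib)

lemma ev_diff_right: "ev \<alpha> (X - Y) = ev \<alpha> X - ev \<alpha> Y"
  unfolding ev_def by (simp add: right_diff_distrib sum_subtractf)

lemma ev_scale_right: "ev \<alpha> (c *s X) = c * ev \<alpha> X"
  unfolding ev_def by (simp add: sum_distrib_left mult.left_commute)

lemma ev_diff_left: "ev (\<alpha> - \<beta>) X = ev \<alpha> X - ev \<beta> X"
  unfolding ev_def by (simp add: left_diff_distrib sum_subtractf)

lemma ev_scale_left: "ev (c *s \<alpha>) X = c * ev \<alpha> X"
  unfolding ev_def by (simp add: sum_distrib_left mult.assoc)

lemma ev_refl_t: "ev \<alpha> (refl_t cor \<beta> X) = ev (refl_dual cor \<beta> \<alpha>) X"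
  unfolding refl_t_def refl_dual_def
  by (simp add: ev_diff_left ev_diff_right ev_scale_left ev_scale_right mult.commute)

lemma refl_dual_refl_dual:
  assumes "ev \<beta> (cor \<beta>) = 2"
  shows "refl_dual cor \<beta> (refl_dual cor \<beta> \<gamma>) = \<gamma>"
proof -
  have "ev (refl_dual cor \<beta> \<gamma>) (cor \<beta>) = - ev \<gamma> (cor \<beta>)"
    using assms by (simp add: refl_dual_def ev_diff_left ev_scale_left)
  then show ?thesis
    by (simp add: refl_dual_def vector_sadd_rdistrib algebra_simps)
qed

lemma bij_betw_refl_dual:
  assumes "root_datum \<Phi> cor" "\<beta> \<in> \<Phi>"
  shows "bij_betw (refl_dual cor \<beta>) \<Phi> \<Phi>"
proof -
  have "ev \<beta> (cor \<beta>) = 2" and "refl_dual cor \<beta> ` \<Phi> \<subseteq> \<Phi>"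
    using assms by (auto simp: root_datum_def)
  then show ?thesis
    by (intro bij_betw_byWitness[where f' = "refl_dual cor \<beta>"]) (simp_all add: refl_dual_refl_dual)
qed

definition dual_root_perm ::
    "(complex^'n) set \<Rightarrow> (complex^'n \<Rightarrow> complex^'n) \<Rightarrow> (complex^'n \<Rightarrow> complex^'n) \<Rightarrow> bool" where
  "dual_root_perm \<Phi> w f \<longleftrightarrow> bij_betw f \<Phi> \<Phi> \<and> (\<forall>\<alpha>\<in>\<Phi>. \<forall>X. ev \<alpha> (w X) = ev (f \<alpha>) X)"

lemma weyl_group_dual_root_perm:
  assumes "root_datum \<Phi> cor" "w \<in> weyl_group \<Phi> cor"
  obtains f where "dual_root_perm \<Phi> w f"
proof -
  from assms(2) have "\<exists>f. dual_root_perm \<Phi> w f"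
  proof induction
    case weyl_id
    show ?case by (rule exI[of _ id]) (simp add: dual_root_perm_def bij_betw_def)
  next
    case (weyl_step v \<beta>)
    then obtain f where f: "bij_betw f \<Phi> \<Phi>" "\<forall>\<alpha>\<in>\<Phi>. \<forall>X. ev \<alpha> (v X) = ev (f \<alpha>) X"
      by (auto simp: dual_root_perm_def)
    have r: "bij_betw (refl_dual cor \<beta>) \<Phi> \<Phi>"
      using assms(1) weyl_step.hyps(2) by (rule bij_betw_refl_dual)
    have "dual_root_perm \<Phi> (refl_t cor \<beta> \<circ> v) (f \<circ> refl_dual cor \<beta>)"
      unfolding dual_root_perm_def
      using bij_betw_trans[OF r f(1)] f(2) bij_betwE[OF r] by (simp add: ev_refl_t)
    then show ?case by blast
  qed
  then show ?thesis using that by blast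
qed

lemma le_dd: "j \<in> {1..p} \<Longrightarrow> ev \<alpha> (A j) \<noteq> 0 \<Longrightarrow> j \<le> dd p A \<alpha>"
  unfolding dd_def by (intro Max_ge) auto

lemma dd_le: "dd p A \<alpha> \<le> p"
  unfolding dd_def by (subst Max_le_iff) auto

lemma dd_pos_attained:
  assumes "dd p A \<alpha> \<ge> 1"
  shows "dd p A \<alpha> \<in> {1..p}" and "ev \<alpha> (A (dd p A \<alpha>)) \<noteq> 0"
proof -
  let ?S = "{0} \<union> {i \<in> {1..p}. ev \<alpha> (A i) \<noteq> 0}"
  have "Max ?S \<in> ?S" by (intro Max_in) auto
  then show "dd p A \<alpha> \<in> {1..p}" and "ev \<alpha> (A (dd p A \<alpha>)) \<noteq> 0"
    using assms unfolding dd_def by auto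
qed

lemma A_in_Uset:
  assumes "j \<in> {1..p}" "k \<le> j"
  shows "A j \<in> Uset \<Phi> p A k"
  using le_dd[OF assms(1), where A = A] assms(2) unfolding Uset_def by fastforce

lemma A_in_Bset:
  assumes "i \<in> {1..p}"
  shows "A i \<in> Bset \<Phi> p A i"
  using A_in_Uset[OF assms order.refl, where \<Phi> = \<Phi> and A = A] dd_pos_attained(2)[of p A] assms
  by (auto simp: Bset_def Uset_def)

lemma Bset_subset_Uset: "Bset \<Phi> p A i \<subseteq> Uset \<Phi> p A i"
  by (auto simp: Bset_def Uset_def)

lemma Uset_antimono: "k \<le> j \<Longrightarrow> Uset \<Phi> p A j \<subseteq> Uset \<Phi> p A k"
  by (auto simp: Uset_def)

lemma Uset_shift_into_Bset:
  assumes "finite \<Phi>" "i \<in> {1..p}" "X \<in> Uset \<Phi> p A i"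
  obtains t where "X + t *s A i \<in> Bset \<Phi> p A i"
proof -
  obtain t where t: "t \<notin> (\<lambda>\<alpha>. - ev \<alpha> X / ev \<alpha> (A i)) ` \<Phi>"
    using ex_new_if_finite[OF infinite_UNIV_char_0] assms(1) by blast
  have "ev \<alpha> (X + t *s A i) \<noteq> 0" if "\<alpha> \<in> \<Phi>" "dd p A \<alpha> = i" for \<alpha>
  proof
    assume "ev \<alpha> (X + t *s A i) = 0"
    moreover have "ev \<alpha> (A i) \<noteq> 0" using dd_pos_attained(2) that assms(2) by fastforce
    ultimately have "t = - ev \<alpha> X / ev \<alpha> (A i)"
      by (simp add: ev_add_right ev_scale_right field_simps add_eq_0_iff)
    then show False using t that(1) by blast
  qed
  moreover have "X + t *s A i \<in> Uset \<Phi> p A i"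
    using assms(3) A_in_Uset[OF assms(2) order.refl, where \<Phi> = \<Phi> and A = A]
    by (simp add: Uset_def ev_add_right ev_scale_right)
  ultimately show ?thesis by (intro that[of t]) (auto simp: Bset_def Uset_def)
qed

definition centraliser_roots :: "(complex^'n) set \<Rightarrow> nat \<Rightarrow> (nat \<Rightarrow> complex^'n) \<Rightarrow> nat \<Rightarrow> (complex^'n) set" where
  "centraliser_roots \<Phi> p A k = {\<alpha> \<in> \<Phi>. dd p A \<alpha> < k}"

lemma centraliser_roots_Suc_p: "centraliser_roots \<Phi> p A (Suc p) = \<Phi>"
  using dd_le[of p A] by (auto simp: centraliser_roots_def le_imp_less_Suc)

lemma centraliser_roots_invariant:
  assumes "dual_root_perm \<Phi> w f" "\<forall>j\<in>{1..p}. k \<le> j \<longrightarrow> w (A j) \<in> Uset \<Phi> p A k"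
  shows "f ` centraliser_roots \<Phi> p A k \<subseteq> centraliser_roots \<Phi> p A k"
proof (rule image_subsetI)
  fix \<alpha> assume \<alpha>: "\<alpha> \<in> centraliser_roots \<Phi> p A k"
  then have f\<alpha>: "f \<alpha> \<in> \<Phi>" and ev_w: "\<forall>X. ev \<alpha> (w X) = ev (f \<alpha>) X"
    using assms(1) by (auto simp: centraliser_roots_def dual_root_perm_def bij_betw_apply)
  have "dd p A (f \<alpha>) < k"
  proof (rule ccontr)
    define j where "j = dd p A (f \<alpha>)"
    assume "\<not> dd p A (f \<alpha>) < k"
    then have "k \<le> j" "1 \<le> j" using \<alpha> by (auto simp: j_def centraliser_roots_def)
    then have "j \<in> {1..p}" and nonzero: "ev (f \<alpha>) (A j) \<noteq> 0"
      using dd_pos_attained[of p A "f \<alpha>"] by (auto simp: j_def)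
    then have "ev \<alpha> (w (A j)) = 0"
      using assms(2) \<alpha> \<open>k \<le> j\<close> by (auto simp: Uset_def centraliser_roots_def)
    then show False using nonzero ev_w by simp
  qed
  then show "f \<alpha> \<in> centraliser_roots \<Phi> p A k" using f\<alpha> by (simp add: centraliser_roots_def)
qed

lemma Uset_invariant_iff:
  assumes "dual_root_perm \<Phi> w f"
  shows "w ` Uset \<Phi> p A k \<subseteq> Uset \<Phi> p A k \<longleftrightarrow>
    f ` centraliser_roots \<Phi> p A k \<subseteq> centraliser_roots \<Phi> p A k"
proof
  assume "w ` Uset \<Phi> p A k \<subseteq> Uset \<Phi> p A k"
  then show "f ` centraliser_roots \<Phi> p A k \<subseteq> centraliser_roots \<Phi> p A k"
    using assms A_in_Uset[where \<Phi> = \<Phi> and A = A]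
    by (intro centraliser_roots_invariant) auto
next
  assume "f ` centraliser_roots \<Phi> p A k \<subseteq> centraliser_roots \<Phi> p A k"
  then show "w ` Uset \<Phi> p A k \<subseteq> Uset \<Phi> p A k"
    using assms by (force simp: Uset_def centraliser_roots_def dual_root_perm_def)
qed

lemma Bset_invariant:
  assumes "finite \<Phi>" "dual_root_perm \<Phi> w f"
    and below_i: "f ` centraliser_roots \<Phi> p A i \<subseteq> centraliser_roots \<Phi> p A i"
    and below_Suc_i: "f ` centraliser_roots \<Phi> p A (Suc i) \<subseteq> centraliser_roots \<Phi> p A (Suc i)"
  shows "w ` Bset \<Phi> p A i \<subseteq> Bset \<Phi> p A i"
proof -
  let ?L = "centraliser_roots \<Phi> p A i"
  have inj: "inj_on f \<Phi>" and ev_w: "\<forall>\<alpha>\<in>\<Phi>. \<forall>X. ev \<alpha> (w X) = ev (f \<alpha>) X"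
    and f\<Phi>: "\<forall>\<alpha>\<in>\<Phi>. f \<alpha> \<in> \<Phi>"
    using assms(2) by (auto simp: dual_root_perm_def bij_betw_def)
  have L_perm: "f ` ?L = ?L"
    using assms(1) below_i inj_on_subset[OF inj]
    by (intro endo_inj_surj) (auto simp: centraliser_roots_def)
  have level_i: "dd p A (f \<alpha>) = i" if \<alpha>: "\<alpha> \<in> \<Phi>" "dd p A \<alpha> = i" for \<alpha>
  proof -
    have "dd p A (f \<alpha>) \<le> i"
      using below_Suc_i \<alpha> by (auto simp: centraliser_roots_def)
    moreover have "f \<alpha> \<notin> f ` ?L"
      using \<alpha> inj by (auto simp: centraliser_roots_def inj_on_def)
    then have "\<not> dd p A (f \<alpha>) < i"
      using L_perm f\<Phi> \<alpha>(1) by (auto simp: centraliser_roots_def)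
    ultimately show ?thesis by simp
  qed
  have "w X \<in> Bset \<Phi> p A i" if X: "X \<in> Bset \<Phi> p A i" for X
    unfolding Bset_def
  proof (intro CollectI ballI conjI impI)
    fix \<alpha> assume "\<alpha> \<in> \<Phi>"
    then show "dd p A \<alpha> < i \<Longrightarrow> ev \<alpha> (w X) = 0"
      and "dd p A \<alpha> = i \<Longrightarrow> ev \<alpha> (w X) \<noteq> 0"
      using X below_i ev_w f\<Phi> level_i by (auto simp: Bset_def centraliser_roots_def)
  qed
  then show ?thesis by blast
qed

lemma Uset_invariant_if_Bset_invariant:
  assumes "finite \<Phi>" "dual_root_perm \<Phi> w f" "i \<in> {1..p}"
    and "w ` Bset \<Phi> p A i \<subseteq> Bset \<Phi> p A i"
  shows "w ` Uset \<Phi> p A i \<subseteq> Uset \<Phi> p A i"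
proof (rule image_subsetI)
  fix X assume "X \<in> Uset \<Phi> p A i"
  then obtain t where "X + t *s A i \<in> Bset \<Phi> p A i"
    using Uset_shift_into_Bset[OF assms(1,3)] by blast
  then have wXt: "w (X + t *s A i) \<in> Uset \<Phi> p A i" and wA: "w (A i) \<in> Uset \<Phi> p A i"
    using assms(4) A_in_Bset[OF assms(3), where \<Phi> = \<Phi>] Bset_subset_Uset[where \<Phi> = \<Phi>]
    by (simp_all add: image_subset_iff subset_iff)
  have ev_w: "\<forall>\<alpha>\<in>\<Phi>. \<forall>X. ev \<alpha> (w X) = ev (f \<alpha>) X"
    using assms(2) by (simp add: dual_root_perm_def)
  have "ev \<alpha> (w X) = 0" if "\<alpha> \<in> \<Phi>" "dd p A \<alpha> < i" for \<alpha>
  proof -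
    have "ev \<alpha> (w X) = ev (f \<alpha>) (X + t *s A i) - t * ev (f \<alpha>) (A i)"
      using ev_w that(1) by (simp add: ev_add_right ev_scale_right)
    also have "\<dots> = ev \<alpha> (w (X + t *s A i)) - t * ev \<alpha> (w (A i))"
      using ev_w that(1) by simp
    also have "\<dots> = 0"
      using wXt wA that by (simp add: Uset_def)
    finally show ?thesis .
  qed
  then show "w X \<in> Uset \<Phi> p A i" by (simp add: Uset_def)
qed

lemma Uset_invariant_iff_Bset_invariant:
  assumes "finite \<Phi>" "dual_root_perm \<Phi> w f" "i \<in> {1..p}"
    and "f ` centraliser_roots \<Phi> p A (Suc i) \<subseteq> centraliser_roots \<Phi> p A (Suc i)"
  shows "w ` Uset \<Phi> p A i \<subseteq> Uset \<Phi> p A i \<longleftrightarrow> w ` Bset \<Phi> p A i \<subseteq> Bset \<Phi> p A i"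
  using Bset_invariant[OF assms(1,2) _ assms(4)]
    Uset_invariant_if_Bset_invariant[OF assms(1-3), where A = A]
    Uset_invariant_iff[OF assms(2), where p = p and A = A and k = i]
  by argo

lemma Stab_chain_mono:
  fixes p i j :: nat
  assumes "\<forall>i\<in>{1..p}. W i = Stab (W (i + 1)) (S i)" "1 \<le> i" "i \<le> j" "j \<le> p + 1"
  shows "W i \<subseteq> W j"
  using assms(3,4)
proof (induction j rule: dec_induct)
  case (step n)
  then have "W n \<subseteq> W (Suc n)" using assms(1,2) by (auto simp: Stab_def)
  then show ?case using step by simp
qed simp

lemma mem_Stab_chain:
  fixes p i :: nat
  assumes "\<forall>i\<in>{1..p}. W i = Stab (W (i + 1)) (S i)" "w \<in> W (p + 1)"
    and "\<forall>i\<in>{1..p}. w ` S i \<subseteq> S i" "1 \<le> i" "i \<le> p + 1"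
  shows "w \<in> W i"
  using assms(5,4)
proof (induction i rule: inc_induct)
  case base
  show ?case using assms(2) .
next
  case (step n)
  then show ?case using assms(1,3) by (simp add: Stab_def)
qed

lemma Stab_chain_bottom_preserves:
  fixes p i :: nat
  assumes "\<forall>i\<in>{1..p}. W i = Stab (W (i + 1)) (S i)" "w \<in> W 1" "i \<in> {1..p}"
  shows "w ` S i \<subseteq> S i"
proof -
  have "w \<in> W i" using Stab_chain_mono[OF assms(1), of 1 i] assms(2,3) by auto
  then show ?thesis using assms(1,3) by (auto simp: Stab_def)
qed

lemma weyl_group_Stab_Uset_eq_Stab_Bset:
  assumes "root_datum \<Phi> cor" "W (p + 1) = weyl_group \<Phi> cor"
    and W: "\<forall>i\<in>{1..p}. W i = Stab (W (i + 1)) (Uset \<Phi> p A i)" and i: "i \<in> {1..p}"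
  shows "Stab (W (i + 1)) (Uset \<Phi> p A i) = Stab (W (i + 1)) (Bset \<Phi> p A i)"
  unfolding Stab_def
proof (rule Collect_cong, rule conj_cong[OF refl])
  fix w assume w: "w \<in> W (i + 1)"
  have "W (i + 1) \<subseteq> W (p + 1)" using i by (intro Stab_chain_mono[OF W]) auto
  then obtain f where f: "dual_root_perm \<Phi> w f"
    using weyl_group_dual_root_perm[OF assms(1)] w assms(2) by blast
  have "f ` centraliser_roots \<Phi> p A (Suc i) \<subseteq> centraliser_roots \<Phi> p A (Suc i)"
  proof (cases "i = p")
    case True
    then show ?thesis
      using f by (simp add: centraliser_roots_Suc_p dual_root_perm_def bij_betw_def)
  next
    case False
    then have "w ` Uset \<Phi> p A (Suc i) \<subseteq> Uset \<Phi> p A (Suc i)"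
      using W i w by (auto simp: Stab_def)
    then show ?thesis using Uset_invariant_iff[OF f] by blast
  qed
  moreover have "finite \<Phi>" using assms(1) by (simp add: root_datum_def)
  ultimately show "w ` Uset \<Phi> p A i \<subseteq> Uset \<Phi> p A i \<longleftrightarrow> w ` Bset \<Phi> p A i \<subseteq> Bset \<Phi> p A i"
    using Uset_invariant_iff_Bset_invariant[OF _ f i] by blast
qed

lemma weyl_group_mem_W1_if_A_in_Bset:
  assumes "root_datum \<Phi> cor" "W (p + 1) = weyl_group \<Phi> cor"
    and W: "\<forall>i\<in>{1..p}. W i = Stab (W (i + 1)) (Uset \<Phi> p A i)"
    and w: "w \<in> weyl_group \<Phi> cor" and wA: "\<forall>j\<in>{1..p}. w (A j) \<in> Bset \<Phi> p A j"
  shows "w \<in> W 1"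
proof (rule mem_Stab_chain[OF W])
  obtain f where f: "dual_root_perm \<Phi> w f"
    using weyl_group_dual_root_perm[OF assms(1) w] .
  have "w ` Uset \<Phi> p A k \<subseteq> Uset \<Phi> p A k" for k
  proof -
    have "\<forall>j\<in>{1..p}. k \<le> j \<longrightarrow> w (A j) \<in> Uset \<Phi> p A k"
      using wA Bset_subset_Uset Uset_antimono by blast
    then show ?thesis using Uset_invariant_iff[OF f] centraliser_roots_invariant[OF f] by blast
  qed
  then show "\<forall>i\<in>{1..p}. w ` Uset \<Phi> p A i \<subseteq> Uset \<Phi> p A i" by blast
qed (use assms(2) w in auto)

theorem lemma2p7:
  fixes \<Phi> :: "(complex^'n) set" and cor :: "complex^'n \<Rightarrow> complex^'n"
    and p :: nat and A :: "nat \<Rightarrow> complex^'n" and W :: "nat \<Rightarrow> (complex^'n \<Rightarrow> complex^'n) set"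
  assumes "root_datum \<Phi> cor" and "p \<ge> 1"
    and "W (p + 1) = weyl_group \<Phi> cor"
    and "\<forall>i\<in>{1..p}. W i = Stab (W (i + 1)) (Uset \<Phi> p A i)"
  shows "(\<forall>i\<in>{1..p}. W i = Stab (W (i + 1)) (Bset \<Phi> p A i)) \<and>
         (\<lambda>w. \<lambda>i\<in>{1..p}. w (A i)) ` weyl_group \<Phi> cor \<inter> PiE {1..p} (Bset \<Phi> p A)
           = (\<lambda>w. \<lambda>i\<in>{1..p}. w (A i)) ` W 1"
proof
  let ?Q = "\<lambda>w. \<lambda>i\<in>{1..p}. w (A i)"
  show W_Bset: "\<forall>i\<in>{1..p}. W i = Stab (W (i + 1)) (Bset \<Phi> p A i)"
  proof
    fix i assume i: "i \<in> {1..p}"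
    then have "W i = Stab (W (i + 1)) (Uset \<Phi> p A i)" using assms(4) by blast
    also have "\<dots> = Stab (W (i + 1)) (Bset \<Phi> p A i)"
      using weyl_group_Stab_Uset_eq_Stab_Bset[OF assms(1,3,4) i] .
    finally show "W i = Stab (W (i + 1)) (Bset \<Phi> p A i)" .
  qed
  have "W 1 \<subseteq> weyl_group \<Phi> cor"
    using Stab_chain_mono[OF W_Bset, of 1 "p + 1"] assms(2,3) by simp
  then have W1_eq: "{w \<in> weyl_group \<Phi> cor. \<forall>j\<in>{1..p}. w (A j) \<in> Bset \<Phi> p A j} = W 1"
    using weyl_group_mem_W1_if_A_in_Bset[OF assms(1,3,4)]
      Stab_chain_bottom_preserves[OF W_Bset] A_in_Bset[where \<Phi> = \<Phi> and A = A]
    by (auto simp: image_subset_iff)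
  have "?Q w \<in> PiE {1..p} (Bset \<Phi> p A) \<longleftrightarrow> (\<forall>j\<in>{1..p}. w (A j) \<in> Bset \<Phi> p A j)" for w
    by (rule restrict_PiE_iff)
  then have "?Q ` weyl_group \<Phi> cor \<inter> PiE {1..p} (Bset \<Phi> p A)
      = ?Q ` {w \<in> weyl_group \<Phi> cor. \<forall>j\<in>{1..p}. w (A j) \<in> Bset \<Phi> p A j}"
    by blast
  also have "\<dots> = ?Q ` W 1" by (simp only: W1_eq)
  finally show "?Q ` weyl_group \<Phi> cor \<inter> PiE {1..p} (Bset \<Phi> p A) = ?Q ` W 1" .
qed

end
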